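(* Let $q$, $T_q$, $P^2_q$, $P^3_q$, $\Delta$, $(\Delta,\mathrm{Id})$ and $(\mathrm{Id},\Delta)$ be as in the context. Then $(\Delta,\mathrm{Id}):P^2_q\to P^3_q$ and $(\mathrm{Id},\Delta):P^2_q\to P^3_q$ are algebra homomorphisms, and $\Delta$ is coassociative: $(\Delta,\mathrm{Id})\circ\Delta=(\mathrm{Id},\Delta)\circ\Delta$ as maps $T_q\to P^3_q$.
   Context: Fix $q\in\mathbb C$ with $|q|=1$ and a square root $q^{1/2}$; $q^{r/2}:=(q^{1/2})^r$. $\mathcal S(\mathbb Z^d,\mathbb C)$ denotes the Fréchet space of complex Schwartz sequences on $\mathbb Z^d$, $\delta^a$ the sequence equal to $1$ at $a$ and $0$ elsewhere. $T_q$ is $\mathcal S(\mathbb Z^2,\mathbb C)$ with continuous multiplication $\delta^{m,n}\delta^{k,\ell}=q^{-kn}\delta^{m+k,n+\ell}$; with $U=\delta^{1,0}$, $V=\delta^{0,1}$ one has $\delta^{m,n}=U^mV^n$ and $UV=qVU$. $P^2_q$ is $\mathcal S(\mathbb Z^4,\mathbb C)$ with continuous multiplication $\delta^{k_1,\ell_1,m_1,n_1}\delta^{k_2,\ell_2,m_2,n_2}=q^{\frac{k_2n_1}{2}-k_2\ell_1-\frac{m_1\ell_2}{2}-m_1n_2}\delta^{k_1+k_2,\ell_1+\ell_2,m_1+m_2,n_1+n_2}$; with $U_1=\delta^{1,0,0,0}$, $V_1=\delta^{0,1,0,0}$, $U_2=\delta^{0,0,1,0}$, $V_2=\delta^{0,0,0,1}$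 one has $\delta^{k,\ell,m,n}=U_1^kV_1^\ell U_2^mV_2^n$. $P^3_q$ is $\mathcal S(\mathbb Z^6,\mathbb C)$, where $\delta^{i,j,k,\ell,m,n}$ is written $U_1^iV_1^jU_2^kV_2^\ell U_3^mV_3^n$, equipped with the continuous associative multiplication (unit $\delta^{0,\dots,0}$, all generators invertible) determined by the relations: $U_aV_a=qV_aU_a$ for $a=1,2,3$; $U_1V_2=q^{-1/2}V_2U_1$, $U_2V_3=q^{-1/2}V_3U_2$, $V_1U_2=q^{1/2}U_2V_1$, $V_2U_3=q^{1/2}U_3V_2$; $U_3V_1=V_1U_3$, $V_3U_1=U_1V_3$; and all $U_a$ commute with each other and all $V_a$ commute with each other. $\Delta:T_q\to P^2_q$ is the continuous algebra homomorphism with $\Delta(U)=U_1U_2$, $\Delta(V)=V_1V_2$. Using the canonical vector space isomorphisms $P^2_q\cong T_q\hat\otimes T_q$ ($\delta^{k,\ell,m,n}\leftrightarrow\delta^{k,\ell}\otimes\delta^{m,n}$) and $P^3_q\cong T_q\hat\otimes T_q\hat\otimes T_q$ ($\delta^{i,j,k,\ell,m,n}\leftrightarrow\delta^{i,j}\otimes\delta^{k,\ell}\otimes\delta^{m,n}$), with $\hat\otimes$ the projective tensor product, $(\Delta,\mathrm{Id})$ and $(\mathrm{Id},\Delta)$ are the continuous linear maps $P^2_q\to P^3_q$ induced by $\Delta\hat\otimes\mathrm{Id}$ and $\mathrm{Id}\hat\otimes\Delta$ respectively. *)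

theory Defs
  imports "HOL-Analysis.Analysis"
begin

text \<open>Index types: Z^2 = int*int, Z^4 = Z^2 * Z^2 (so that P2 = T (x) T),
  Z^6 = Z^2 * Z^2 * Z^2 (so that P3 = T (x) T (x) T).  The root qh stands for q^(1/2),
  q = qh^2, and all phases q^(r/2) are written as qh powi r.\<close>

type_synonym idx2 = "int \<times> int"
type_synonym idx4 = "idx2 \<times> idx2"
type_synonym idx6 = "idx2 \<times> idx2 \<times> idx2"

definition schwartz :: "('a \<Rightarrow> real) \<Rightarrow> ('a \<Rightarrow> complex) set" where
  "schwartz w = {f. \<forall>N::nat. \<exists>C. \<forall>x. (1 + w x) ^ N * cmod (f x) \<le> C}"

fun w2 :: "idx2 \<Rightarrow> real" where
  "w2 (a, b) = real_of_int (\<bar>a\<bar> + \<bar>b\<bar>)"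

fun w4 :: "idx4 \<Rightarrow> real" where
  "w4 (x, y) = w2 x + w2 y"

fun w6 :: "idx6 \<Rightarrow> real" where
  "w6 (x, y, z) = w2 x + w2 y + w2 z"

abbreviation "S2 \<equiv> schwartz w2"
abbreviation "S4 \<equiv> schwartz w4"
abbreviation "S6 \<equiv> schwartz w6"

definition dlt :: "'a \<Rightarrow> 'a \<Rightarrow> complex" where
  "dlt a = (\<lambda>x. if x = a then 1 else 0)"

text \<open>Twisted convolution: delta^x * delta^y = qh powi (beta x y) * delta^(x+y).\<close>
definition twmul :: "complex \<Rightarrow> ('a::ab_group_add \<Rightarrow> 'a \<Rightarrow> int) \<Rightarrow>
    ('a \<Rightarrow> complex) \<Rightarrow> ('a \<Rightarrow> complex) \<Rightarrow> ('a \<Rightarrow> complex)" where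
  "twmul qh \<beta> f g = (\<lambda>z. \<Sum>\<^sub>\<infinity>x. f x * g (z - x) * qh powi (\<beta> x (z - x)))"

text \<open>T_q: delta^(m,n) delta^(k,l) = q^(-k n) delta^(m+k,n+l).\<close>
fun betaT :: "idx2 \<Rightarrow> idx2 \<Rightarrow> int" where
  "betaT (m, n) (k, l) = - 2 * k * n"

text \<open>P^2_q (exponent doubled): k2 n1/2 - k2 l1 - m1 l2/2 - n1 m2.\<close>
fun beta2 :: "idx4 \<Rightarrow> idx4 \<Rightarrow> int" where
  "beta2 ((k1, l1), (m1, n1)) ((k2, l2), (m2, n2)) =
     k2 * n1 - 2 * k2 * l1 - m1 * l2 - 2 * n1 * m2"

text \<open>P^3_q (exponent doubled), the cocycle determined by the stated relations with
  delta^(i,j,k,l,m,n) = U1^i V1^j U2^k V2^l U3^m V3^n.\<close>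
fun beta3 :: "idx6 \<Rightarrow> idx6 \<Rightarrow> int" where
  "beta3 ((i, j), (k, l), (m, n)) ((i', j'), (k', l'), (m', n')) =
     - 2 * j * i' - k * j' + l * i' - 2 * l * k' - m * l' + n * k' - 2 * n * m'"

definition mulT :: "complex \<Rightarrow> (idx2 \<Rightarrow> complex) \<Rightarrow> (idx2 \<Rightarrow> complex) \<Rightarrow> (idx2 \<Rightarrow> complex)" where
  "mulT qh = twmul qh betaT"
definition mulP2 :: "complex \<Rightarrow> (idx4 \<Rightarrow> complex) \<Rightarrow> (idx4 \<Rightarrow> complex) \<Rightarrow> (idx4 \<Rightarrow> complex)" where
  "mulP2 qh = twmul qh beta2"
definition mulP3 :: "complex \<Rightarrow> (idx6 \<Rightarrow> complex) \<Rightarrow> (idx6 \<Rightarrow> complex) \<Rightarrow> (idx6 \<Rightarrow> complex)" where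
  "mulP3 qh = twmul qh beta3"

text \<open>Coproduct: the continuous homomorphism with U |-> U1 U2, V |-> V1 V2.
  Since delta^(m,n) = U^m V^n, Delta(delta^(m,n)) = (U1U2)^m (V1V2)^n = q^(-mn/2) delta^((m,n),(m,n)).\<close>
fun Delta :: "complex \<Rightarrow> (idx2 \<Rightarrow> complex) \<Rightarrow> (idx4 \<Rightarrow> complex)" where
  "Delta qh f ((k, l), (m, n)) =
     (if (k, l) = (m, n) then qh powi (- (k * l)) * f (k, l) else 0)"

text \<open>Continuous extensions of L (x) Id and Id (x) L to the completed tensor products:
  F = sum F(a,b) delta^a (x) delta^b  is mapped to  sum F(a,b) L(delta^a) (x) delta^b, etc.\<close>
fun tensor_left :: "((idx2 \<Rightarrow> complex) \<Rightarrow> (idx4 \<Rightarrow> complex)) \<Rightarrow> (idx4 \<Rightarrow> complex) \<Rightarrow> (idx6 \<Rightarrow> complex)" where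
  "tensor_left L F (x1, x2, x3) = (\<Sum>\<^sub>\<infinity>a. L (dlt a) (x1, x2) * F (a, x3))"

fun tensor_right :: "((idx2 \<Rightarrow> complex) \<Rightarrow> (idx4 \<Rightarrow> complex)) \<Rightarrow> (idx4 \<Rightarrow> complex) \<Rightarrow> (idx6 \<Rightarrow> complex)" where
  "tensor_right L F (x1, x2, x3) = (\<Sum>\<^sub>\<infinity>b. F (x1, b) * L (dlt b) (x2, x3))"

definition DeltaId :: "complex \<Rightarrow> (idx4 \<Rightarrow> complex) \<Rightarrow> (idx6 \<Rightarrow> complex)" where
  "DeltaId qh = tensor_left (Delta qh)"
definition IdDelta :: "complex \<Rightarrow> (idx4 \<Rightarrow> complex) \<Rightarrow> (idx6 \<Rightarrow> complex)" where
  "IdDelta qh = tensor_right (Delta qh)"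

definition alg_hom ::
  "('a \<Rightarrow> complex) set \<Rightarrow> (('a \<Rightarrow> complex) \<Rightarrow> ('a \<Rightarrow> complex) \<Rightarrow> ('a \<Rightarrow> complex)) \<Rightarrow> ('a \<Rightarrow> complex) \<Rightarrow>
   ('b \<Rightarrow> complex) set \<Rightarrow> (('b \<Rightarrow> complex) \<Rightarrow> ('b \<Rightarrow> complex) \<Rightarrow> ('b \<Rightarrow> complex)) \<Rightarrow> ('b \<Rightarrow> complex) \<Rightarrow>
   (('a \<Rightarrow> complex) \<Rightarrow> ('b \<Rightarrow> complex)) \<Rightarrow> bool" where
  "alg_hom SA mulA oneA SB mulB oneB \<phi> \<longleftrightarrow>
     (\<forall>f\<in>SA. \<phi> f \<in> SB) \<and>
     (\<forall>f\<in>SA. \<forall>g\<in>SA. \<phi> (\<lambda>x. f x + g x) = (\<lambda>y. \<phi> f y + \<phi> g y)) \<and>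
     (\<forall>c. \<forall>f\<in>SA. \<phi> (\<lambda>x. c * f x) = (\<lambda>y. c * \<phi> f y)) \<and>
     (\<forall>f\<in>SA. \<forall>g\<in>SA. \<phi> (mulA f g) = mulB (\<phi> f) (\<phi> g)) \<and>
     \<phi> oneA = oneB"

end

theory Submission
  imports Defs
begin

text \<open>Each of \<Delta>, (\<Delta>,Id) and (Id,\<Delta>) pushes a coefficient sequence forward along an
  injective homomorphism of index lattices (the diagonals a \<mapsto> (a,a), (a,c) \<mapsto> (a,a,c) and
  (a,b) \<mapsto> (a,b,b)) and multiplies it by a phase q^(\<phi>/2).  Such a phased push-forward is
  multiplicative for twisted convolutions as soon as the phase carries the cocycle \<beta>' of the
  target to the cocycle \<beta> of the source, \<phi> a + \<phi> b + \<beta>' (e a) (e b) = \<phi> (a + b) + \<beta> a b;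
  for the three cocycles at hand this is an identity of integer polynomials.  It preserves rapid
  decay because the weight grows at most linearly along the embedding.  Coassociativity holds
  because composing phased push-forwards composes the embeddings and adds the phases, and both
  composites are the triple diagonal a \<mapsto> (a,a,a) with phase q^(-kl) at a = (k,l).\<close>

definition phased_pushforward ::
  "complex \<Rightarrow> ('a \<Rightarrow> 'b) \<Rightarrow> ('a \<Rightarrow> int) \<Rightarrow> ('a \<Rightarrow> complex) \<Rightarrow> 'b \<Rightarrow> complex" where
  "phased_pushforward qh e \<phi> F y =
     (if y \<in> range e then qh powi \<phi> (inv e y) * F (inv e y) else 0)"

lemma phased_pushforward_image:
  "inj e \<Longrightarrow> phased_pushforward qh e \<phi> F (e x) = qh powi \<phi> x * F x"
  by (simp add: phased_pushforward_def)

lemma phased_pushforward_outside: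
  "y \<notin> range e \<Longrightarrow> phased_pushforward qh e \<phi> F y = 0"
  by (simp add: phased_pushforward_def)

lemma phased_pushforward_unique:
  assumes "inj e"
    and "\<And>x. G (e x) = qh powi \<phi> x * F x"
    and "\<And>y. y \<notin> range e \<Longrightarrow> G y = 0"
  shows "G = phased_pushforward qh e \<phi> F"
  using assms by (auto simp: fun_eq_iff phased_pushforward_def)

lemma phased_pushforward_comp:
  assumes "qh \<noteq> 0" "inj e" "inj e'"
  shows "phased_pushforward qh e \<phi> (phased_pushforward qh e' \<phi>' F)
       = phased_pushforward qh (e \<circ> e') (\<lambda>x. \<phi> (e' x) + \<phi>' x) F"
proof (rule sym, rule phased_pushforward_unique)
  show "inj e" by fact
  show "phased_pushforward qh (e \<circ> e') (\<lambda>x. \<phi> (e' x) + \<phi>' x) F (e z)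
      = qh powi \<phi> z * phased_pushforward qh e' \<phi>' F z" for z
  proof (cases "z \<in> range e'")
    case True
    then obtain x where z: "z = e' x" by blast
    have "phased_pushforward qh (e \<circ> e') (\<lambda>x. \<phi> (e' x) + \<phi>' x) F ((e \<circ> e') x)
        = qh powi (\<phi> (e' x) + \<phi>' x) * F x"
      using assms by (intro phased_pushforward_image inj_compose)
    with assms show ?thesis
      by (simp add: z phased_pushforward_image power_int_add)
  next
    case False
    with \<open>inj e\<close> have "e z \<notin> range (e \<circ> e')" by (auto dest: injD)
    with False show ?thesis by (simp add: phased_pushforward_outside)
  qed
  show "phased_pushforward qh (e \<circ> e') (\<lambda>x. \<phi> (e' x) + \<phi>' x) F y = 0" if "y \<notin> range e" for y
    using that by (intro phased_pushforward_outside) auto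
qed

lemma phased_pushforward_dlt_zero:
  assumes "inj e" "Modules.additive e" "\<phi> 0 = 0"
  shows "phased_pushforward qh e \<phi> (dlt 0) = dlt 0"
proof (rule sym, rule phased_pushforward_unique)
  have "e 0 = 0" using \<open>Modules.additive e\<close> by (rule additive.zero)
  with \<open>inj e\<close> have "e x = 0 \<longleftrightarrow> x = 0" for x by (metis injD)
  with \<open>\<phi> 0 = 0\<close> show "dlt 0 (e x) = qh powi \<phi> x * dlt 0 x" for x
    by (simp add: dlt_def)
  show "dlt 0 y = 0" if "y \<notin> range e" for y
    using that \<open>e 0 = 0\<close> by (auto simp: dlt_def)
qed (fact \<open>inj e\<close>)

lemma twmul_phased_pushforward:
  fixes e :: "'a::ab_group_add \<Rightarrow> 'b::ab_group_add"
  assumes "qh \<noteq> 0" "inj e" "Modules.additive e"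
    and cocycle: "\<And>a b. \<phi> a + \<phi> b + \<beta>' (e a) (e b) = \<phi> (a + b) + \<beta> a b"
  shows "twmul qh \<beta>' (phased_pushforward qh e \<phi> F) (phased_pushforward qh e \<phi> G)
       = phased_pushforward qh e \<phi> (twmul qh \<beta> F G)"
proof (rule phased_pushforward_unique)
  let ?F = "phased_pushforward qh e \<phi> F" and ?G = "phased_pushforward qh e \<phi> G"
  define summand where "summand = (\<lambda>y x. ?F x * ?G (y - x) * qh powi \<beta>' x (y - x))"
  have twmul_eq: "twmul qh \<beta>' ?F ?G y = infsum (summand y) UNIV" for y
    by (simp add: twmul_def summand_def)
  have summand_outside: "summand y x = 0" if "x \<notin> range e \<or> y - x \<notin> range e" for x y
    using that by (auto simp: summand_def phased_pushforward_outside)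
  have summand_image: "summand (e z) (e a) = qh powi \<phi> z * (F a * G (z - a) * qh powi \<beta> a (z - a))"
    for z a
  proof -
    have diff: "e z - e a = e (z - a)"
      using \<open>Modules.additive e\<close> by (simp add: additive.diff)
    have phase: "qh powi \<phi> a * qh powi \<phi> (z - a) * qh powi \<beta>' (e a) (e (z - a))
        = qh powi \<phi> z * qh powi \<beta> a (z - a)"
      using cocycle[of a "z - a"] \<open>qh \<noteq> 0\<close> by (simp flip: power_int_add)
    have "summand (e z) (e a)
        = (qh powi \<phi> a * qh powi \<phi> (z - a) * qh powi \<beta>' (e a) (e (z - a))) * (F a * G (z - a))"
      unfolding summand_def diff using \<open>inj e\<close> by (simp add: phased_pushforward_image mult_ac)
    then show ?thesis unfolding phase by (simp add: mult_ac)
  qed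
  show "inj e" by fact
  show "twmul qh \<beta>' ?F ?G (e z) = qh powi \<phi> z * twmul qh \<beta> F G z" for z
  proof -
    have "twmul qh \<beta>' ?F ?G (e z) = infsum (summand (e z)) (range e)"
      unfolding twmul_eq by (rule infsum_cong_neutral) (auto simp: summand_outside)
    also have "\<dots> = infsum (summand (e z) \<circ> e) UNIV"
      using \<open>inj e\<close> by (rule infsum_reindex)
    also have "\<dots> = qh powi \<phi> z * twmul qh \<beta> F G z"
      unfolding twmul_def comp_def summand_image by (rule infsum_cmult_right')
    finally show ?thesis .
  qed
  show "twmul qh \<beta>' ?F ?G y = 0" if "y \<notin> range e" for y
  proof -
    have "summand y x = 0" for x
    proof (rule summand_outside, rule ccontr)
      assume "\<not> (x \<notin> range e \<or> y - x \<notin> range e)"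
      then obtain a b where "x = e a" "y - x = e b" by blast
      then have "y = e (b + a)" using \<open>Modules.additive e\<close> by (simp add: diff_eq_eq additive.add)
      with that show False by blast
    qed
    then show ?thesis unfolding twmul_eq by (simp add: infsum_0)
  qed
qed

lemma phased_pushforward_schwartz:
  assumes F: "F \<in> schwartz w" and "cmod qh = 1"
    and w_nonneg: "\<And>x. 0 \<le> w x" and w'_nonneg: "\<And>y. 0 \<le> w' y"
    and growth: "\<And>x. 1 + w' (e x) \<le> K * (1 + w x)"
  shows "phased_pushforward qh e \<phi> F \<in> schwartz w'"
  unfolding schwartz_def
proof (intro CollectI allI)
  fix N :: nat
  obtain C where C: "\<And>x. (1 + w x) ^ N * cmod (F x) \<le> C"
    using F unfolding schwartz_def by blast
  have "0 \<le> K"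
    using growth[of undefined] w_nonneg[of undefined] w'_nonneg[of "e undefined"]
    by (smt (verit) zero_le_mult_iff)
  have "0 \<le> C"
    using order_trans[OF _ C[of undefined]] w_nonneg[of undefined] by simp
  have "(1 + w' y) ^ N * cmod (phased_pushforward qh e \<phi> F y) \<le> K ^ N * C" for y
  proof (cases "y \<in> range e")
    case True
    define x where "x = inv e y"
    have y: "y = e x" using True by (simp add: x_def f_inv_into_f)
    have "phased_pushforward qh e \<phi> F y = qh powi \<phi> x * F x"
      using True by (simp add: phased_pushforward_def x_def)
    then have "(1 + w' y) ^ N * cmod (phased_pushforward qh e \<phi> F y) = (1 + w' (e x)) ^ N * cmod (F x)"
      using \<open>cmod qh = 1\<close> by (simp add: y norm_mult norm_power_int)
    also have "\<dots> \<le> (K * (1 + w x)) ^ N * cmod (F x)"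
      using growth w'_nonneg by (intro mult_right_mono power_mono) auto
    also have "\<dots> = K ^ N * ((1 + w x) ^ N * cmod (F x))"
      by (simp add: power_mult_distrib)
    also have "\<dots> \<le> K ^ N * C"
      using C \<open>0 \<le> K\<close> by (simp add: mult_left_mono)
    finally show ?thesis .
  next
    case False
    then show ?thesis using \<open>0 \<le> K\<close> \<open>0 \<le> C\<close> by (simp add: phased_pushforward_outside)
  qed
  then show "\<exists>C'. \<forall>y. (1 + w' y) ^ N * cmod (phased_pushforward qh e \<phi> F y) \<le> C'" by blast
qed

lemma alg_hom_phased_pushforward:
  fixes e :: "'a::ab_group_add \<Rightarrow> 'b::ab_group_add"
  assumes "cmod qh = 1" "inj e" "Modules.additive e" "\<phi> 0 = 0"
    and cocycle: "\<And>a b. \<phi> a + \<phi> b + \<beta>' (e a) (e b) = \<phi> (a + b) + \<beta> a b"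
    and "\<And>x. 0 \<le> w x" "\<And>y. 0 \<le> w' y" "\<And>x. 1 + w' (e x) \<le> K * (1 + w x)"
  shows "alg_hom (schwartz w) (twmul qh \<beta>) (dlt 0) (schwartz w') (twmul qh \<beta>') (dlt 0)
           (phased_pushforward qh e \<phi>)"
  unfolding alg_hom_def
proof (intro conjI ballI allI)
  show "phased_pushforward qh e \<phi> f \<in> schwartz w'" if "f \<in> schwartz w" for f
    using that assms(1,6-8) by (rule phased_pushforward_schwartz)
  show "phased_pushforward qh e \<phi> (\<lambda>x. f x + g x)
      = (\<lambda>y. phased_pushforward qh e \<phi> f y + phased_pushforward qh e \<phi> g y)" for f g
    by (simp add: fun_eq_iff phased_pushforward_def distrib_left)
  show "phased_pushforward qh e \<phi> (\<lambda>x. c * f x) = (\<lambda>y. c * phased_pushforward qh e \<phi> f y)"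
    for c f
    by (simp add: fun_eq_iff phased_pushforward_def mult.left_commute)
  have "qh \<noteq> 0" using \<open>cmod qh = 1\<close> by auto
  then show "phased_pushforward qh e \<phi> (twmul qh \<beta> f g)
      = twmul qh \<beta>' (phased_pushforward qh e \<phi> f) (phased_pushforward qh e \<phi> g)" for f g
    using assms(2,3) cocycle by (rule twmul_phased_pushforward[symmetric])
  show "phased_pushforward qh e \<phi> (dlt 0) = dlt 0"
    using assms(2-4) by (rule phased_pushforward_dlt_zero)
qed

lemma infsum_eq_single:
  assumes "\<And>a. a \<noteq> b \<Longrightarrow> f a = 0"
  shows "infsum f UNIV = f b"
proof -
  have "infsum f UNIV = infsum f {b}"
    using assms by (intro infsum_cong_neutral) auto
  then show ?thesis by simp
qed

fun diag_phase :: "idx2 \<Rightarrow> int" where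
  "diag_phase (k, l) = - (k * l)"

lemma Delta_eq_phased_pushforward: "Delta qh = phased_pushforward qh (\<lambda>a. (a, a)) diag_phase"
proof (rule ext, rule phased_pushforward_unique)
  show "inj (\<lambda>a::idx2. (a, a))" by (simp add: inj_def)
  show "Delta qh f (a, a) = qh powi diag_phase a * f a" for f a
    by (cases a) simp
  show "Delta qh f y = 0" if "y \<notin> range (\<lambda>a. (a, a))" for f y
    using that by (cases y) auto
qed

lemma Delta_dlt: "Delta qh (dlt a) (x, y) = (if x = a \<and> y = a then qh powi diag_phase a else 0)"
  by (cases x; cases y) (auto simp: dlt_def)

lemma DeltaId_eq_phased_pushforward:
  "DeltaId qh = phased_pushforward qh (\<lambda>(a, c). (a, a, c)) (\<lambda>(a, c). diag_phase a)"
proof (rule ext, rule phased_pushforward_unique)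
  fix F
  have DeltaId_apply: "DeltaId qh F (x1, x2, x3) = (if x1 = x2 then qh powi diag_phase x1 * F (x1, x3) else 0)"
    for x1 x2 x3
    unfolding DeltaId_def tensor_left.simps Delta_dlt by (subst infsum_eq_single[where b = x1]) auto
  show "inj (\<lambda>(a::idx2, c::idx2). (a, a, c))" by (simp add: inj_def)
  show "DeltaId qh F ((\<lambda>(a, c). (a, a, c)) x) = qh powi (\<lambda>(a, c). diag_phase a) x * F x" for x
    by (cases x) (simp add: DeltaId_apply)
  show "DeltaId qh F y = 0" if "y \<notin> range (\<lambda>(a, c). (a, a, c))" for y
    using that by (cases y) (auto simp: DeltaId_apply)
qed

lemma IdDelta_eq_phased_pushforward:
  "IdDelta qh = phased_pushforward qh (\<lambda>(a, b). (a, b, b)) (\<lambda>(a, b). diag_phase b)"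
proof (rule ext, rule phased_pushforward_unique)
  fix F
  have IdDelta_apply: "IdDelta qh F (x1, x2, x3) = (if x2 = x3 then qh powi diag_phase x2 * F (x1, x2) else 0)"
    for x1 x2 x3
    unfolding IdDelta_def tensor_right.simps Delta_dlt by (subst infsum_eq_single[where b = x2]) auto
  show "inj (\<lambda>(a::idx2, b::idx2). (a, b, b))" by (simp add: inj_def)
  show "IdDelta qh F ((\<lambda>(a, b). (a, b, b)) x) = qh powi (\<lambda>(a, b). diag_phase b) x * F x" for x
    by (cases x) (simp add: IdDelta_apply)
  show "IdDelta qh F y = 0" if "y \<notin> range (\<lambda>(a, b). (a, b, b))" for y
    using that by (cases y) (auto simp: IdDelta_apply)
qed

lemma beta3_diag_left_cocycle:
  "diag_phase a + diag_phase a' + beta3 (a, a, c) (a', a', c') = diag_phase (a + a') + beta2 (a, c) (a', c')"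
  by (cases a; cases a'; cases c; cases c') (simp add: algebra_simps)

lemma beta3_diag_right_cocycle:
  "diag_phase b + diag_phase b' + beta3 (a, b, b) (a', b', b') = diag_phase (b + b') + beta2 (a, b) (a', b')"
  by (cases a; cases a'; cases b; cases b') (simp add: algebra_simps)

lemma w2_nonneg: "0 \<le> w2 x"
  by (cases x) simp

lemma w4_nonneg: "0 \<le> w4 x"
  by (cases x) (simp add: w2_nonneg add_nonneg_nonneg)

lemma w6_nonneg: "0 \<le> w6 x"
  by (cases x) (simp add: w2_nonneg add_nonneg_nonneg)

lemma alg_hom_DeltaId:
  assumes "cmod qh = 1"
  shows "alg_hom S4 (mulP2 qh) (dlt 0) S6 (mulP3 qh) (dlt 0) (DeltaId qh)"
  unfolding DeltaId_eq_phased_pushforward mulP2_def mulP3_def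
proof (rule alg_hom_phased_pushforward[where K = 2])
  show "cmod qh = 1" by fact
  show "inj (\<lambda>(a::idx2, c::idx2). (a, a, c))" by (auto simp: inj_def)
  show "Modules.additive (\<lambda>(a::idx2, c::idx2). (a, a, c))"
    by unfold_locales auto
  show "(\<lambda>(a, c). diag_phase a) 0 = 0" by (simp add: zero_prod_def)
  show "(\<lambda>(a, c). diag_phase a) x + (\<lambda>(a, c). diag_phase a) y
      + beta3 ((\<lambda>(a, c). (a, a, c)) x) ((\<lambda>(a, c). (a, a, c)) y)
      = (\<lambda>(a, c). diag_phase a) (x + y) + beta2 x y" for x y
    using beta3_diag_left_cocycle[of "fst x" "fst y" "snd x" "snd y"] by (simp add: case_prod_beta)
  show "1 + w6 ((\<lambda>(a, c). (a, a, c)) x) \<le> 2 * (1 + w4 x)" for x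
    using w2_nonneg[of "snd x"] by (cases x) simp
qed (simp_all add: w4_nonneg w6_nonneg)

lemma alg_hom_IdDelta:
  assumes "cmod qh = 1"
  shows "alg_hom S4 (mulP2 qh) (dlt 0) S6 (mulP3 qh) (dlt 0) (IdDelta qh)"
  unfolding IdDelta_eq_phased_pushforward mulP2_def mulP3_def
proof (rule alg_hom_phased_pushforward[where K = 2])
  show "cmod qh = 1" by fact
  show "inj (\<lambda>(a::idx2, b::idx2). (a, b, b))" by (auto simp: inj_def)
  show "Modules.additive (\<lambda>(a::idx2, b::idx2). (a, b, b))"
    by unfold_locales auto
  show "(\<lambda>(a, b). diag_phase b) 0 = 0" by (simp add: zero_prod_def)
  show "(\<lambda>(a, b). diag_phase b) x + (\<lambda>(a, b). diag_phase b) y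
      + beta3 ((\<lambda>(a, b). (a, b, b)) x) ((\<lambda>(a, b). (a, b, b)) y)
      = (\<lambda>(a, b). diag_phase b) (x + y) + beta2 x y" for x y
    using beta3_diag_right_cocycle[of "snd x" "snd y" "fst x" "fst y"] by (simp add: case_prod_beta)
  show "1 + w6 ((\<lambda>(a, b). (a, b, b)) x) \<le> 2 * (1 + w4 x)" for x
    using w2_nonneg[of "fst x"] by (cases x) simp
qed (simp_all add: w4_nonneg w6_nonneg)

theorem mainTheorem2:
  fixes qh :: complex
  assumes "cmod qh = 1"
  shows "alg_hom S4 (mulP2 qh) (dlt 0) S6 (mulP3 qh) (dlt 0) (DeltaId qh)
       \<and> alg_hom S4 (mulP2 qh) (dlt 0) S6 (mulP3 qh) (dlt 0) (IdDelta qh)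
       \<and> (\<forall>f\<in>S2. DeltaId qh (Delta qh f) = IdDelta qh (Delta qh f))"
proof (intro conjI ballI)
  show "alg_hom S4 (mulP2 qh) (dlt 0) S6 (mulP3 qh) (dlt 0) (DeltaId qh)"
    using assms by (rule alg_hom_DeltaId)
  show "alg_hom S4 (mulP2 qh) (dlt 0) S6 (mulP3 qh) (dlt 0) (IdDelta qh)"
    using assms by (rule alg_hom_IdDelta)
  have "qh \<noteq> 0" using assms by auto
  then show "DeltaId qh (Delta qh f) = IdDelta qh (Delta qh f)" for f
    unfolding DeltaId_eq_phased_pushforward IdDelta_eq_phased_pushforward Delta_eq_phased_pushforward
    by (simp add: phased_pushforward_comp inj_def comp_def)
qed

end
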